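(* Let $n\ge 2$ be an integer, $\tau,\gamma>0$, and $$F(\delta,\phi)=\tau\big[(n-2)(n+\delta)-2\phi(n-1)\delta\big]\big[(2-\delta)(n+\delta)+2\phi(n-1)\delta\big]-\gamma\delta(n+\delta)^{2}.$$ Let $\delta_0=\frac{2\tau(n-2)}{\gamma+\tau(n-2)}$. Then there is a unique smooth function $\delta(\phi)$ near $\phi=0$ with $\delta(0)=\delta_0$ and $F(\delta(\phi),\phi)=0$, and $$\delta(\phi)=\delta_0+\phi\,\frac{2\tau(n-1)\delta_{0}(n-4+\delta_{0})}{\gamma(n+3\delta_{0})+\tau(n-2)(n+3\delta_{0}-4)}+O(\phi^2).$$ Moreover, setting $\alpha(\phi)=(n-2)-(n-1)\phi\frac{2\delta(\phi)}{n+\delta(\phi)}$, $$\alpha(\phi)=(n-2)-\phi\,\frac{4\tau(n-1)(n-2)}{\tau(n+2)(n-2)+\gamma n}+O(\phi^2),$$ so the threshold $R^{cci}=\tau\alpha/\gamma$ satisfies $$R^{cci}=\frac{(n-2)\tau}{\gamma}-\phi\frac{\tau}{\gamma}\left(\frac{4\tau(n-1)(n-2)}{\tau(n+2)(n-2)+\gamma n}\right)+O(\phi^2).$$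
   Context: $F(\delta,\phi)=0$ characterises the non-trivial quasi-equilibrium of the fast variable $\delta=[II]/[I]$ in the pairwise SIR model on an $n$-regular network with clustering coefficient $\phi$ under the compact improved closure; the corresponding $\alpha=[SI]/[I]$ is given by $\alpha=(n-2)-(n-1)\phi\frac{2\delta}{n+\delta}$, and the epidemic threshold is $R^{cci}=\tau\alpha/\gamma$, with $\tau$ the per-link infection rate and $\gamma$ the recovery rate. *)

theory Defs
  imports "HOL-Analysis.Analysis" "HOL-Library.Landau_Symbols"
begin

definition Fcci :: "nat \<Rightarrow> real \<Rightarrow> real \<Rightarrow> real \<Rightarrow> real \<Rightarrow> real" where
  "Fcci n \<tau> \<gamma> \<delta> \<phi> =
     \<tau> * ((real n - 2) * (real n + \<delta>) - 2 * \<phi> * (real n - 1) * \<delta>)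
       * ((2 - \<delta>) * (real n + \<delta>) + 2 * \<phi> * (real n - 1) * \<delta>)
     - \<gamma> * \<delta> * (real n + \<delta>)^2"

definition delta0 :: "nat \<Rightarrow> real \<Rightarrow> real \<Rightarrow> real" where
  "delta0 n \<tau> \<gamma> = 2 * \<tau> * (real n - 2) / (\<gamma> + \<tau> * (real n - 2))"

text \<open>alpha = [SI]/[I] as a function of phi and delta.\<close>
definition alpha_cci :: "nat \<Rightarrow> real \<Rightarrow> real \<Rightarrow> real" where
  "alpha_cci n \<phi> \<delta> = (real n - 2) - (real n - 1) * \<phi> * (2 * \<delta> / (real n + \<delta>))"

text \<open>Smoothness (C-infinity) of a real function on a set S (intended: open S):
  there is a sequence of successive derivatives, all existing on S.\<close>
definition smooth_on :: "real set \<Rightarrow> (real \<Rightarrow> real) \<Rightarrow> bool" where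
  "smooth_on S f \<longleftrightarrow> (\<exists>D :: nat \<Rightarrow> real \<Rightarrow> real.
      (\<forall>x\<in>S. D 0 x = f x) \<and>
      (\<forall>k. \<forall>x\<in>S. (D k has_real_derivative D (Suc k) x) (at x)))"

end

theory Submission
  imports Defs
begin

text \<open>
  Write \<open>F(a,\<phi>) - F(b,\<phi>) = (a - b) A(a,b,\<phi>)\<close> and \<open>F(\<delta>,\<phi>') - F(\<delta>,\<phi>) = (\<phi>' - \<phi>) B(\<delta>,\<phi>,\<phi>')\<close>
  with polynomial divided differences \<open>A\<close>, \<open>B\<close>. At the base point
  \<open>A(\<delta>\<^sub>0,\<delta>\<^sub>0,0) = -(n+\<delta>\<^sub>0)\<^sup>2(\<gamma> + \<tau>(n-2)) < 0\<close>, so near \<open>(\<delta>\<^sub>0, 0)\<close> the function \<open>F\<close> is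
  strictly decreasing in \<open>\<delta>\<close>: the intermediate value theorem gives a unique root \<open>\<delta>(\<phi>)\<close>, and the two
  identities give \<open>\<delta>' = -B(\<delta>,\<phi>,\<phi>) / A(\<delta>,\<delta>,\<phi>)\<close>. The right-hand side is rational in \<open>(\<phi>, \<delta>)\<close>, so
  differentiating it along the solution again and again shows that \<open>\<delta>\<close> is smooth. The expansions
  then follow from Taylor's theorem with \<open>\<delta>'(0) = -B(\<delta>\<^sub>0,0,0) / A(\<delta>\<^sub>0,\<delta>\<^sub>0,0)\<close>, and \<open>\<alpha>\<close> is
  expanded through \<open>\<delta>(\<phi>) - \<delta>\<^sub>0 = O(\<phi>)\<close>.
\<close>

section \<open>Smooth solutions of rational ODEs\<close>

text \<open>
  If \<open>f' x = rexp_eval x (f x) r\<close>, then the derivative of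
  \<open>t \<mapsto> rexp_eval t (f t) e\<close> is again such an expression, namely \<open>rexp_deriv r e\<close>; iterating from
  \<open>Yvar\<close> produces all higher derivatives of \<open>f\<close>.
\<close>

datatype rexp = Xvar | Yvar | Const real | Plus rexp rexp | Times rexp rexp | Recip rexp

primrec rexp_eval :: "real \<Rightarrow> real \<Rightarrow> rexp \<Rightarrow> real" where
  "rexp_eval x y Xvar = x"
| "rexp_eval x y Yvar = y"
| "rexp_eval x y (Const c) = c"
| "rexp_eval x y (Plus e1 e2) = rexp_eval x y e1 + rexp_eval x y e2"
| "rexp_eval x y (Times e1 e2) = rexp_eval x y e1 * rexp_eval x y e2"
| "rexp_eval x y (Recip e) = inverse (rexp_eval x y e)"

primrec rexp_denoms :: "rexp \<Rightarrow> rexp set" where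
  "rexp_denoms Xvar = {}"
| "rexp_denoms Yvar = {}"
| "rexp_denoms (Const c) = {}"
| "rexp_denoms (Plus e1 e2) = rexp_denoms e1 \<union> rexp_denoms e2"
| "rexp_denoms (Times e1 e2) = rexp_denoms e1 \<union> rexp_denoms e2"
| "rexp_denoms (Recip e) = insert e (rexp_denoms e)"

primrec rexp_deriv :: "rexp \<Rightarrow> rexp \<Rightarrow> rexp" where
  "rexp_deriv r Xvar = Const 1"
| "rexp_deriv r Yvar = r"
| "rexp_deriv r (Const c) = Const 0"
| "rexp_deriv r (Plus e1 e2) = Plus (rexp_deriv r e1) (rexp_deriv r e2)"
| "rexp_deriv r (Times e1 e2) = Plus (Times (rexp_deriv r e1) e2) (Times e1 (rexp_deriv r e2))"
| "rexp_deriv r (Recip e) = Times (Const (-1)) (Times (rexp_deriv r e) (Times (Recip e) (Recip e)))"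

lemma rexp_denoms_deriv: "rexp_denoms (rexp_deriv r e) \<subseteq> rexp_denoms r \<union> rexp_denoms e"
  by (induction e) auto

lemma rexp_denoms_deriv_iterate: "rexp_denoms ((rexp_deriv r ^^ k) Yvar) \<subseteq> rexp_denoms r"
  by (induction k) (use rexp_denoms_deriv in fastforce)+

lemma has_real_derivative_rexp_eval:
  assumes f: "(f has_real_derivative rexp_eval x (f x) r) (at x)"
    and "\<forall>d\<in>rexp_denoms e. rexp_eval x (f x) d \<noteq> 0"
  shows "((\<lambda>t. rexp_eval t (f t) e) has_real_derivative rexp_eval x (f x) (rexp_deriv r e)) (at x)"
  using assms(2)
proof (induction e)
  case (Plus e1 e2)
  then show ?case by (auto intro: DERIV_add)
next
  case (Times e1 e2)
  then show ?case by (auto intro!: derivative_eq_intros)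
next
  case (Recip e)
  then have "((\<lambda>t. rexp_eval t (f t) e) has_real_derivative rexp_eval x (f x) (rexp_deriv r e)) (at x)"
    and "rexp_eval x (f x) e \<noteq> 0" by auto
  from DERIV_inverse_fun[OF this] show ?case by (simp add: power2_eq_square)
qed (use f in \<open>auto intro: DERIV_ident\<close>)

lemma smooth_on_rexp_ode:
  assumes "\<And>x. x \<in> S \<Longrightarrow> (f has_real_derivative rexp_eval x (f x) r) (at x)"
    and "\<And>x d. x \<in> S \<Longrightarrow> d \<in> rexp_denoms r \<Longrightarrow> rexp_eval x (f x) d \<noteq> 0"
  shows "smooth_on S f"
  unfolding smooth_on_def
proof (intro exI[of _ "\<lambda>k x. rexp_eval x (f x) ((rexp_deriv r ^^ k) Yvar)"] conjI ballI allI)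
  fix k x assume "x \<in> S"
  then show "((\<lambda>x. rexp_eval x (f x) ((rexp_deriv r ^^ k) Yvar)) has_real_derivative
      rexp_eval x (f x) ((rexp_deriv r ^^ Suc k) Yvar)) (at x)"
    using has_real_derivative_rexp_eval assms rexp_denoms_deriv_iterate by (simp, blast)
qed simp

lemma real_polynomial_function_imp_rexp:
  assumes "real_polynomial_function (p :: real \<times> real \<Rightarrow> real)"
  shows "\<exists>e. rexp_denoms e = {} \<and> (\<forall>x y. rexp_eval x y e = p (x, y))"
  using assms
proof (induction p rule: real_polynomial_function.induct)
  case (linear p)
  have "x * p (1, 0) + y * p (0, 1) = p (x, y)" for x y
  proof -
    interpret bounded_linear p by fact
    have "x * p (1, 0) + y * p (0, 1) = p (x *\<^sub>R (1, 0) + y *\<^sub>R (0, 1))"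
      by (simp only: add scaleR real_scaleR_def)
    then show ?thesis by simp
  qed
  then show ?case
    by (intro exI[of _ "Plus (Times Xvar (Const (p (1, 0)))) (Times Yvar (Const (p (0, 1))))"]) simp
next
  case (const c)
  show ?case by (intro exI[of _ "Const c"]) simp
next
  case (add p q)
  then obtain e1 e2 where "rexp_denoms e1 = {} \<and> (\<forall>x y. rexp_eval x y e1 = p (x, y))"
    "rexp_denoms e2 = {} \<and> (\<forall>x y. rexp_eval x y e2 = q (x, y))" by blast
  then show ?case by (intro exI[of _ "Plus e1 e2"]) simp
next
  case (mult p q)
  then obtain e1 e2 where "rexp_denoms e1 = {} \<and> (\<forall>x y. rexp_eval x y e1 = p (x, y))"
    "rexp_denoms e2 = {} \<and> (\<forall>x y. rexp_eval x y e2 = q (x, y))" by blast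
  then show ?case by (intro exI[of _ "Times e1 e2"]) simp
qed

lemma smooth_on_rational_ode:
  fixes P Q :: "real \<Rightarrow> real \<Rightarrow> real"
  assumes "real_polynomial_function (\<lambda>z. P (fst z) (snd z))"
    and "real_polynomial_function (\<lambda>z. Q (fst z) (snd z))"
    and "\<And>x. x \<in> S \<Longrightarrow> (f has_real_derivative P x (f x) / Q x (f x)) (at x)"
    and "\<And>x. x \<in> S \<Longrightarrow> Q x (f x) \<noteq> 0"
  shows "smooth_on S f"
proof -
  obtain eP eQ where eP: "rexp_denoms eP = {}" "\<And>x y. rexp_eval x y eP = P x y"
    and eQ: "rexp_denoms eQ = {}" "\<And>x y. rexp_eval x y eQ = Q x y"
    using real_polynomial_function_imp_rexp[OF assms(1)] real_polynomial_function_imp_rexp[OF assms(2)] by auto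
  show ?thesis
  proof (rule smooth_on_rexp_ode[where r = "Times eP (Recip eQ)"])
    show "(f has_real_derivative rexp_eval x (f x) (Times eP (Recip eQ))) (at x)" if "x \<in> S" for x
      using assms(3)[OF that] by (simp add: eP eQ divide_inverse)
  qed (use assms(4) eP eQ in auto)
qed

lemma real_polynomial_function_fst: "real_polynomial_function (\<lambda>z :: real \<times> real. fst z)"
  by (rule real_polynomial_function.intros(1)) (rule bounded_linear_fst)

lemma real_polynomial_function_snd: "real_polynomial_function (\<lambda>z :: real \<times> real. snd z)"
  by (rule real_polynomial_function.intros(1)) (rule bounded_linear_snd)

lemmas real_polynomial_function_intros =
  real_polynomial_function_fst real_polynomial_function_snd real_polynomial_function.intros(2-4)
  real_polynomial_function_diff real_polynomial_function_minus real_polynomial_function_power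

section \<open>Taylor expansions and Landau bounds\<close>

lemma smooth_on_open_derivatives:
  assumes "smooth_on S f" "open S"
  obtains f' f'' where "\<And>x. x \<in> S \<Longrightarrow> (f has_real_derivative f' x) (at x)"
    "\<And>x. x \<in> S \<Longrightarrow> (f' has_real_derivative f'' x) (at x)"
    "\<And>x. x \<in> S \<Longrightarrow> isCont f'' x"
proof -
  obtain D where D0: "\<And>x. x \<in> S \<Longrightarrow> D 0 x = f x"
    and D: "\<And>k x. x \<in> S \<Longrightarrow> (D k has_real_derivative D (Suc k) x) (at x)"
    using assms(1) unfolding smooth_on_def by blast
  show ?thesis
  proof (rule that[of "D 1" "D 2"])
    fix x assume "x \<in> S"
    show "(f has_real_derivative D 1 x) (at x)"
    proof (rule has_field_derivative_transform_within_open)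
      show "(D 0 has_real_derivative D 1 x) (at x)" using D[OF \<open>x \<in> S\<close>, of 0] by simp
    qed (use assms(2) \<open>x \<in> S\<close> D0 in auto)
    show "(D 1 has_real_derivative D 2 x) (at x)"
      using D[OF \<open>x \<in> S\<close>, of 1] by (simp add: numeral_2_eq_2)
    show "isCont (D 2) x"
      using DERIV_isCont[OF D[OF \<open>x \<in> S\<close>, of 2]] .
  qed
qed

lemma taylor_remainder_bigo:
  assumes "\<epsilon> > 0"
    and f': "\<And>x. \<bar>x\<bar> < \<epsilon> \<Longrightarrow> (f has_real_derivative f' x) (at x)"
    and f'': "\<And>x. \<bar>x\<bar> < \<epsilon> \<Longrightarrow> (f' has_real_derivative f'' x) (at x)"
    and "isCont f'' 0"
  shows "(\<lambda>x. f x - (f 0 + x * f' 0)) \<in> O[nhds 0](\<lambda>x. x\<^sup>2)"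
proof -
  have "\<forall>\<^sub>F t in nhds 0. \<bar>f'' t\<bar> < \<bar>f'' 0\<bar> + 1"
    using \<open>isCont f'' 0\<close> unfolding isCont_def tendsto_at_iff_tendsto_nhds
    by (intro order_tendstoD(2)[OF tendsto_rabs]) auto
  then obtain \<eta> where "\<eta> > 0" and \<eta>: "\<And>t. \<bar>t\<bar> < \<eta> \<Longrightarrow> \<bar>f'' t\<bar> < \<bar>f'' 0\<bar> + 1"
    unfolding eventually_nhds_metric dist_real_def by auto
  define M where "M = (\<bar>f'' 0\<bar> + 1) / 2"
  have "\<bar>f x - (f 0 + x * f' 0)\<bar> \<le> M * x\<^sup>2" if x: "\<bar>x\<bar> < min \<epsilon> \<eta>" for x
  proof -
    define D where "D m = (if m = 0 then f else if m = 1 then f' else f'')" for m :: nat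
    have "\<exists>t. \<bar>t\<bar> \<le> \<bar>x\<bar> \<and> f x = (\<Sum>m<2. D m 0 / fact m * x ^ m) + D 2 t / fact 2 * x ^ 2"
      using x f' f'' by (intro Maclaurin_bi_le) (auto simp: D_def less_2_cases_iff)
    then obtain t where "\<bar>t\<bar> \<le> \<bar>x\<bar>" and t: "f x - (f 0 + x * f' 0) = f'' t / 2 * x\<^sup>2"
      by (auto simp: D_def numeral_2_eq_2)
    have "\<bar>f'' t\<bar> \<le> \<bar>f'' 0\<bar> + 1" using \<eta>[of t] \<open>\<bar>t\<bar> \<le> \<bar>x\<bar>\<close> x by auto
    then show ?thesis unfolding t M_def by (simp add: abs_mult divide_right_mono mult_right_mono)
  qed
  then have "\<forall>\<^sub>F x in nhds 0. \<bar>f x - (f 0 + x * f' 0)\<bar> \<le> M * x\<^sup>2"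
    using \<open>\<epsilon> > 0\<close> \<open>\<eta> > 0\<close> unfolding eventually_nhds_metric dist_real_def
    by (intro exI[of _ "min \<epsilon> \<eta>"]) auto
  then show ?thesis by (intro bigoI[of _ M]) auto
qed

lemma smooth_on_isCont:
  assumes "smooth_on S f" "open S" "x \<in> S"
  shows "isCont f x"
proof -
  obtain f' where "(f has_real_derivative f' x) (at x)"
    using smooth_on_open_derivatives[OF assms(1,2)] assms(3) by metis
  then show ?thesis by (rule DERIV_isCont)
qed

lemma smooth_on_taylor_bigo:
  assumes "\<epsilon> > 0" "smooth_on (ball 0 \<epsilon>) f" and f: "(f has_real_derivative c) (at 0)"
  shows "(\<lambda>x. f x - (f 0 + x * c)) \<in> O[nhds 0](\<lambda>x. x\<^sup>2)"
proof -
  obtain f' f'' where f': "\<And>x. x \<in> ball 0 \<epsilon> \<Longrightarrow> (f has_real_derivative f' x) (at x)"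
    and f'': "\<And>x. x \<in> ball 0 \<epsilon> \<Longrightarrow> (f' has_real_derivative f'' x) (at x)"
    and "\<And>x. x \<in> ball 0 \<epsilon> \<Longrightarrow> isCont f'' x"
    using smooth_on_open_derivatives[OF assms(2)] by blast
  moreover have "f' 0 = c" using DERIV_unique[OF f'[of 0] f] \<open>\<epsilon> > 0\<close> by simp
  ultimately show ?thesis
    using taylor_remainder_bigo[of \<epsilon> f f' f''] \<open>\<epsilon> > 0\<close> by simp
qed

lemma DERIV_imp_bigo_diff:
  assumes "(f has_real_derivative c) (at x0)"
  shows "(\<lambda>x. f x - f x0) \<in> O[nhds x0](\<lambda>x. x - x0)"
proof -
  have "((\<lambda>x. (f x - f x0) / (x - x0)) \<longlongrightarrow> c) (at x0)"
    using assms unfolding has_field_derivative_iff .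
  then have "\<forall>\<^sub>F x in at x0. norm ((f x - f x0) / (x - x0)) < norm c + 1"
    by (intro order_tendstoD(2)[OF tendsto_norm]) auto
  then have "\<forall>\<^sub>F x in at x0. norm (f x - f x0) \<le> (norm c + 1) * norm (x - x0)"
    unfolding eventually_at_filter
    by eventually_elim (auto simp: field_split_simps abs_divide)
  then show ?thesis
    by (intro bigoI[of _ "norm c + 1"]) (simp add: eventually_nhds_conv_at)
qed

lemma scaled_expansion_bigo:
  fixes f :: "real \<Rightarrow> real"
  assumes "(\<lambda>x. f x - (a - x * k)) \<in> O[F](g)"
  shows "(\<lambda>x. c * f x / d - (a * c / d - x * (c / d) * k)) \<in> O[F](g)"
proof -
  have "(\<lambda>x. c * f x / d - (a * c / d - x * (c / d) * k)) = (\<lambda>x. c / d * (f x - (a - x * k)))"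
    by (simp add: fun_eq_iff algebra_simps diff_divide_distrib)
  then show ?thesis using assms by (simp only: cmult_in_bigo_iff) simp
qed

section \<open>An implicit function theorem via divided differences\<close>

lemma dist_triple_le:
  fixes a b c a' b' c' :: real
  shows "dist (a, b, c) (a', b', c') \<le> \<bar>a - a'\<bar> + \<bar>b - b'\<bar> + \<bar>c - c'\<bar>"
  using norm_Pair_le[of "a - a'" "(b - b', c - c')"] norm_Pair_le[of "b - b'" "c - c'"]
  by (simp add: dist_norm)

locale divided_differences =
  fixes F :: "real \<Rightarrow> real \<Rightarrow> real" and A B :: "real \<Rightarrow> real \<Rightarrow> real \<Rightarrow> real"
  assumes F_diff_fst: "F a x - F b x = (a - b) * A a b x"
    and F_diff_snd: "F y x' - F y x = (x' - x) * B y x x'"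
    and isCont_A: "isCont (\<lambda>(a, b, x). A a b x) z"
    and isCont_B: "isCont (\<lambda>(y, x, x'). B y x x') z"
begin

lemma tendsto_A:
  assumes "(f \<longlongrightarrow> a) G" "(g \<longlongrightarrow> b) G" "(h \<longlongrightarrow> x) G"
  shows "((\<lambda>t. A (f t) (g t) (h t)) \<longlongrightarrow> A a b x) G"
  using isCont_tendsto_compose[OF isCont_A tendsto_Pair[OF assms(1) tendsto_Pair[OF assms(2,3)]]]
  by simp

lemma tendsto_B:
  assumes "(f \<longlongrightarrow> y) G" "(g \<longlongrightarrow> x) G" "(h \<longlongrightarrow> x') G"
  shows "((\<lambda>t. B (f t) (g t) (h t)) \<longlongrightarrow> B y x x') G"
  using isCont_tendsto_compose[OF isCont_B tendsto_Pair[OF assms(1) tendsto_Pair[OF assms(2,3)]]]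
  by simp

lemma isCont_F_fst: "isCont (\<lambda>y. F y x) y0"
proof -
  have "(\<lambda>y. F 0 x + y * A y 0 x) = (\<lambda>y. F y x)"
  proof
    show "F 0 x + y * A y 0 x = F y x" for y using F_diff_fst[of y x 0] by (simp add: diff_eq_eq)
  qed
  moreover have "isCont (\<lambda>y. F 0 x + y * A y 0 x) y0"
    unfolding isCont_def by (intro tendsto_add tendsto_mult tendsto_A tendsto_const tendsto_ident_at)
  ultimately show ?thesis by (simp only:)
qed

lemma isCont_F_snd: "isCont (\<lambda>x. F y x) x0"
proof -
  have "(\<lambda>x. F y 0 + x * B y 0 x) = (\<lambda>x. F y x)"
  proof
    show "F y 0 + x * B y 0 x = F y x" for x using F_diff_snd[of y x 0] by (simp add: diff_eq_eq)
  qed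
  moreover have "isCont (\<lambda>x. F y 0 + x * B y 0 x) x0"
    unfolding isCont_def by (intro tendsto_add tendsto_mult tendsto_B tendsto_const tendsto_ident_at)
  ultimately show ?thesis by (simp only:)
qed

lemma A_negative_box:
  assumes "A y0 y0 x0 < 0"
  obtains \<rho> where "\<rho> > 0"
    "\<And>a b x. \<bar>a - y0\<bar> < \<rho> \<Longrightarrow> \<bar>b - y0\<bar> < \<rho> \<Longrightarrow> \<bar>x - x0\<bar> < \<rho> \<Longrightarrow> A a b x < A y0 y0 x0 / 2"
proof -
  have "\<forall>\<^sub>F z in nhds (y0, y0, x0). (\<lambda>(a, b, x). A a b x) z < A y0 y0 x0 / 2"
    using isCont_A[of "(y0, y0, x0)"] assms
    unfolding isCont_def tendsto_at_iff_tendsto_nhds by (intro order_tendstoD) auto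
  then obtain d where "d > 0" and d: "\<And>z. dist z (y0, y0, x0) < d \<Longrightarrow> (\<lambda>(a, b, x). A a b x) z < A y0 y0 x0 / 2"
    unfolding eventually_nhds_metric by blast
  show ?thesis
  proof (rule that[of "d / 3"])
    fix a b x assume "\<bar>a - y0\<bar> < d / 3" "\<bar>b - y0\<bar> < d / 3" "\<bar>x - x0\<bar> < d / 3"
    then have "dist (a, b, x) (y0, y0, x0) < d"
      using dist_triple_le[of a b x y0 y0 x0] by simp
    then show "A a b x < A y0 y0 x0 / 2" using d by fastforce
  qed (use \<open>d > 0\<close> in simp)
qed

lemma solution_has_derivative:
  assumes sol: "\<forall>\<^sub>F x' in nhds x. F (\<delta> x') x' = 0"
    and bound: "\<forall>\<^sub>F x' in nhds x. c \<le> \<bar>A (\<delta> x') (\<delta> x) x'\<bar>" and "c > 0"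
  shows "(\<delta> has_real_derivative - B (\<delta> x) x x / A (\<delta> x) (\<delta> x) x) (at x)"
proof -
  have "F (\<delta> x) x = 0" using eventually_nhds_x_imp_x[OF sol] .
  have quotient: "\<forall>\<^sub>F x' in nhds x. \<delta> x' - \<delta> x = - (x' - x) * B (\<delta> x) x x' / A (\<delta> x') (\<delta> x) x'"
    using sol bound
  proof eventually_elim
    case (elim x')
    have "(\<delta> x' - \<delta> x) * A (\<delta> x') (\<delta> x) x' = - (x' - x) * B (\<delta> x) x x'"
      using F_diff_fst[of "\<delta> x'" x' "\<delta> x"] F_diff_snd[of "\<delta> x" x' x] elim \<open>F (\<delta> x) x = 0\<close>
      by (simp add: algebra_simps)
    moreover have "A (\<delta> x') (\<delta> x) x' \<noteq> 0" using elim \<open>c > 0\<close> by auto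
    ultimately show ?case by (simp add: field_simps)
  qed
  have "((\<lambda>x'. \<delta> x' - \<delta> x) \<longlongrightarrow> 0) (at x)"
  proof (rule Lim_null_comparison)
    have "\<forall>\<^sub>F x' in nhds x. norm (\<delta> x' - \<delta> x) \<le> \<bar>x' - x\<bar> * \<bar>B (\<delta> x) x x'\<bar> / c"
      using quotient bound
    proof eventually_elim
      case (elim x')
      then have "norm (\<delta> x' - \<delta> x) = \<bar>x' - x\<bar> * \<bar>B (\<delta> x) x x'\<bar> / \<bar>A (\<delta> x') (\<delta> x) x'\<bar>"
        by (simp add: abs_mult abs_minus_commute)
      also have "\<dots> \<le> \<bar>x' - x\<bar> * \<bar>B (\<delta> x) x x'\<bar> / c"
        using elim \<open>c > 0\<close> by (intro divide_left_mono) auto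
      finally show ?case .
    qed
    then show "\<forall>\<^sub>F x' in at x. norm (\<delta> x' - \<delta> x) \<le> \<bar>x' - x\<bar> * \<bar>B (\<delta> x) x x'\<bar> / c"
      by (simp add: eventually_nhds_conv_at)
    have "((\<lambda>x'. \<bar>x' - x\<bar> * \<bar>B (\<delta> x) x x'\<bar> / c) \<longlongrightarrow> \<bar>x - x\<bar> * \<bar>B (\<delta> x) x x\<bar> / c) (at x)"
      using \<open>c > 0\<close> by (intro tendsto_intros tendsto_B tendsto_ident_at) auto
    then show "((\<lambda>x'. \<bar>x' - x\<bar> * \<bar>B (\<delta> x) x x'\<bar> / c) \<longlongrightarrow> 0) (at x)" by simp
  qed
  then have "(\<delta> \<longlongrightarrow> \<delta> x) (at x)" by (simp add: LIM_zero_iff)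
  moreover have "A (\<delta> x) (\<delta> x) x \<noteq> 0" using eventually_nhds_x_imp_x[OF bound] \<open>c > 0\<close> by auto
  ultimately have "((\<lambda>x'. - B (\<delta> x) x x' / A (\<delta> x') (\<delta> x) x') \<longlongrightarrow> - B (\<delta> x) x x / A (\<delta> x) (\<delta> x) x) (at x)"
    by (intro tendsto_intros tendsto_A tendsto_B tendsto_ident_at)
  moreover have "\<forall>\<^sub>F x' in at x. - B (\<delta> x) x x' / A (\<delta> x') (\<delta> x) x' = (\<delta> x' - \<delta> x) / (x' - x)"
    using quotient unfolding eventually_at_filter by eventually_elim (auto simp: field_split_simps)
  ultimately show ?thesis
    unfolding has_field_derivative_iff using tendsto_cong by force
qed

lemma implicit_function:
  assumes root: "F y0 x0 = 0" and neg: "A y0 y0 x0 < 0"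
  obtains \<epsilon> r \<delta> where "\<epsilon> > 0" "r > 0" "\<delta> x0 = y0"
    "\<And>x. \<bar>x - x0\<bar> < \<epsilon> \<Longrightarrow> \<bar>\<delta> x - y0\<bar> \<le> r \<and> F (\<delta> x) x = 0"
    "\<And>x y. \<bar>x - x0\<bar> < \<epsilon> \<Longrightarrow> \<bar>y - y0\<bar> \<le> r \<Longrightarrow> F y x = 0 \<Longrightarrow> y = \<delta> x"
    "\<And>x. \<bar>x - x0\<bar> < \<epsilon> \<Longrightarrow> A (\<delta> x) (\<delta> x) x < 0"
    "\<And>x. \<bar>x - x0\<bar> < \<epsilon> \<Longrightarrow> (\<delta> has_real_derivative - B (\<delta> x) x x / A (\<delta> x) (\<delta> x) x) (at x)"
proof -
  define c where "c = - A y0 y0 x0 / 2"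
  have "c > 0" using neg unfolding c_def by simp
  obtain \<rho> where "\<rho> > 0"
    and box: "\<And>a b x. \<bar>a - y0\<bar> < \<rho> \<Longrightarrow> \<bar>b - y0\<bar> < \<rho> \<Longrightarrow> \<bar>x - x0\<bar> < \<rho> \<Longrightarrow> A a b x < - c"
    using A_negative_box[OF neg] unfolding c_def by auto
  define r where "r = \<rho> / 2"
  have "r > 0" "r < \<rho>" using \<open>\<rho> > 0\<close> unfolding r_def by auto
  have "F (y0 + r) x0 < 0" "F (y0 - r) x0 > 0"
    using F_diff_fst[of "y0 + r" x0 y0] F_diff_fst[of "y0 - r" x0 y0] box[of "y0 + r" y0 x0]
      box[of "y0 - r" y0 x0] root \<open>r > 0\<close> \<open>r < \<rho>\<close> \<open>\<rho> > 0\<close> \<open>c > 0\<close>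
    by (simp_all add: mult_pos_neg mult_neg_neg)
  then have "\<forall>\<^sub>F x in nhds x0. F (y0 + r) x < 0 \<and> 0 < F (y0 - r) x \<and> dist x x0 < \<rho>"
    using isCont_F_snd[where y = "y0 + r"] isCont_F_snd[where y = "y0 - r"] \<open>\<rho> > 0\<close>
    unfolding isCont_def tendsto_at_iff_tendsto_nhds
    by (intro eventually_conj order_tendstoD eventually_nhds_metric[THEN iffD2]) auto
  then obtain \<epsilon> where "\<epsilon> > 0"
    and \<epsilon>: "\<And>x. \<bar>x - x0\<bar> < \<epsilon> \<Longrightarrow> F (y0 + r) x < 0 \<and> 0 < F (y0 - r) x \<and> \<bar>x - x0\<bar> < \<rho>"
    unfolding eventually_nhds_metric dist_real_def by blast
  have unique: "y1 = y2"
    if "\<bar>x - x0\<bar> < \<epsilon>" "\<bar>y1 - y0\<bar> \<le> r" "\<bar>y2 - y0\<bar> \<le> r" "F y1 x = 0" "F y2 x = 0" for x y1 y2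
  proof -
    have "A y1 y2 x < 0" using box[of y1 y2 x] \<epsilon>[of x] that \<open>r < \<rho>\<close> \<open>c > 0\<close> by auto
    then show ?thesis using F_diff_fst[of y1 x y2] that by simp
  qed
  have root_exists: "\<exists>y. \<bar>y - y0\<bar> \<le> r \<and> F y x = 0" if "\<bar>x - x0\<bar> < \<epsilon>" for x
  proof -
    have "\<exists>y\<ge>y0 - r. y \<le> y0 + r \<and> F y x = 0"
      using \<epsilon>[OF that] \<open>r > 0\<close> isCont_F_fst by (intro IVT2[of "\<lambda>y. F y x"]) auto
    then obtain y where "y0 - r \<le> y" "y \<le> y0 + r" "F y x = 0" by blast
    then show ?thesis by (intro exI[of _ y]) auto
  qed
  define \<delta> where "\<delta> x = (SOME y. \<bar>y - y0\<bar> \<le> r \<and> F y x = 0)" for x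
  have \<delta>: "\<bar>\<delta> x - y0\<bar> \<le> r \<and> F (\<delta> x) x = 0" if "\<bar>x - x0\<bar> < \<epsilon>" for x
    unfolding \<delta>_def using root_exists[OF that] by (rule someI_ex)
  have bound: "c \<le> \<bar>A (\<delta> x') (\<delta> x) x'\<bar>" if "\<bar>x - x0\<bar> < \<epsilon>" "\<bar>x' - x0\<bar> < \<epsilon>" for x x'
    using box[of "\<delta> x'" "\<delta> x" x'] \<delta>[OF that(1)] \<delta>[OF that(2)] \<epsilon>[OF that(2)] \<open>r < \<rho>\<close> by auto
  have near: "\<forall>\<^sub>F x' in nhds x. \<bar>x' - x0\<bar> < \<epsilon>" if "\<bar>x - x0\<bar> < \<epsilon>" for x
    using eventually_nhds_in_open[of "ball x0 \<epsilon>" x] that by (simp add: dist_real_def abs_minus_commute)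
  show ?thesis
  proof (rule that[OF \<open>\<epsilon> > 0\<close> \<open>r > 0\<close> _ \<delta>])
    show "\<delta> x0 = y0" using unique[of x0 "\<delta> x0" y0] \<delta>[of x0] \<open>\<epsilon> > 0\<close> \<open>r > 0\<close> root by simp
    show "y = \<delta> x" if "\<bar>x - x0\<bar> < \<epsilon>" "\<bar>y - y0\<bar> \<le> r" "F y x = 0" for x y
      using unique[of x y "\<delta> x"] \<delta>[of x] that by blast
    show "A (\<delta> x) (\<delta> x) x < 0" if "\<bar>x - x0\<bar> < \<epsilon>" for x
      using box[of "\<delta> x" "\<delta> x" x] \<delta>[OF that] \<epsilon>[OF that] \<open>r < \<rho>\<close> \<open>c > 0\<close> by auto
    show "(\<delta> has_real_derivative - B (\<delta> x) x x / A (\<delta> x) (\<delta> x) x) (at x)" if "\<bar>x - x0\<bar> < \<epsilon>" for x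
      using near[OF that] \<delta> bound[OF that] \<open>c > 0\<close>
      by (intro solution_has_derivative[where c = c]) (auto elim: eventually_mono)
  qed
qed

end

lemma smooth_solution_eventually_eq:
  fixes \<delta> \<delta>' :: "real \<Rightarrow> real"
  assumes unique: "\<And>x y. \<bar>x\<bar> < \<epsilon> \<Longrightarrow> \<bar>y - b\<bar> \<le> r \<Longrightarrow> F y x = 0 \<Longrightarrow> y = \<delta> x"
    and "\<epsilon> > 0" "r > 0" "\<epsilon>' > 0" "smooth_on (ball 0 \<epsilon>') \<delta>'" "\<delta>' 0 = b"
    and solution: "\<forall>x\<in>ball 0 \<epsilon>'. F (\<delta>' x) x = 0"
  shows "\<forall>\<^sub>F x in nhds 0. \<delta>' x = \<delta> x"
proof -
  have "isCont \<delta>' 0" using smooth_on_isCont[OF assms(5)] \<open>\<epsilon>' > 0\<close> by simp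
  then have "\<forall>\<^sub>F x in nhds 0. \<bar>\<delta>' x - b\<bar> < r"
    using \<open>\<delta>' 0 = b\<close> \<open>r > 0\<close> unfolding isCont_def tendsto_at_iff_tendsto_nhds
    by (intro order_tendstoD(2)[OF tendsto_rabs]) (auto intro!: tendsto_eq_intros)
  moreover have "\<forall>\<^sub>F x in nhds 0. x \<in> ball 0 (min \<epsilon> \<epsilon>')"
    using \<open>\<epsilon> > 0\<close> \<open>\<epsilon>' > 0\<close> by (intro eventually_nhds_in_open) auto
  ultimately show ?thesis
    by eventually_elim (auto intro: unique simp: solution)
qed

section \<open>The compact improved closure\<close>

text \<open>
  With \<open>P(\<delta>) = (n-2)(n+\<delta>) - 2\<phi>(n-1)\<delta>\<close> and \<open>Q(\<delta>) = (2-\<delta>)(n+\<delta>) + 2\<phi>(n-1)\<delta>\<close> we have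
  \<open>F = \<tau> P Q - \<gamma> \<delta> (n+\<delta>)\<^sup>2\<close>, and the divided difference of \<open>P Q\<close> is \<open>P(a) \<Delta>Q + Q(b) \<Delta>P\<close>.
\<close>
definition Fcci_ddiff_delta :: "nat \<Rightarrow> real \<Rightarrow> real \<Rightarrow> real \<Rightarrow> real \<Rightarrow> real \<Rightarrow> real" where
  "Fcci_ddiff_delta n \<tau> \<gamma> a b \<phi> =
     \<tau> * (((real n - 2) * (real n + a) - 2 * \<phi> * (real n - 1) * a)
            * ((2 - real n + 2 * \<phi> * (real n - 1)) - (a + b))
          + ((2 - b) * (real n + b) + 2 * \<phi> * (real n - 1) * b)
            * ((real n - 2) - 2 * \<phi> * (real n - 1)))
     - \<gamma> * ((real n)\<^sup>2 + 2 * real n * (a + b) + a\<^sup>2 + a * b + b\<^sup>2)"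

definition Fcci_ddiff_phi :: "nat \<Rightarrow> real \<Rightarrow> real \<Rightarrow> real \<Rightarrow> real \<Rightarrow> real \<Rightarrow> real" where
  "Fcci_ddiff_phi n \<tau> \<gamma> \<delta> \<phi> \<phi>' =
     2 * \<tau> * (real n - 1) * \<delta>
       * ((real n + \<delta>) * (real n - 4 + \<delta>) - 2 * (real n - 1) * \<delta> * (\<phi> + \<phi>'))"

interpretation Fcci: divided_differences "Fcci n \<tau> \<gamma>" "Fcci_ddiff_delta n \<tau> \<gamma>" "Fcci_ddiff_phi n \<tau> \<gamma>"
proof
  show "Fcci n \<tau> \<gamma> a \<phi> - Fcci n \<tau> \<gamma> b \<phi> = (a - b) * Fcci_ddiff_delta n \<tau> \<gamma> a b \<phi>" for a b \<phi>
    unfolding Fcci_def Fcci_ddiff_delta_def by (simp add: algebra_simps power2_eq_square)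
  show "Fcci n \<tau> \<gamma> \<delta> \<phi>' - Fcci n \<tau> \<gamma> \<delta> \<phi> = (\<phi>' - \<phi>) * Fcci_ddiff_phi n \<tau> \<gamma> \<delta> \<phi> \<phi>'" for \<delta> \<phi> \<phi>'
    unfolding Fcci_def Fcci_ddiff_phi_def by (simp add: algebra_simps power2_eq_square)
  show "isCont (\<lambda>(a, b, \<phi>). Fcci_ddiff_delta n \<tau> \<gamma> a b \<phi>) z" for z
    unfolding case_prod_unfold Fcci_ddiff_delta_def by (intro continuous_intros)
  show "isCont (\<lambda>(\<delta>, \<phi>, \<phi>'). Fcci_ddiff_phi n \<tau> \<gamma> \<delta> \<phi> \<phi>') z" for z
    unfolding case_prod_unfold Fcci_ddiff_phi_def by (intro continuous_intros)
qed

lemma cci_denominators_pos: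
  assumes "n \<ge> 2" "\<tau> > 0" "\<gamma> > 0"
  shows "\<gamma> + \<tau> * (real n - 2) > 0" "\<tau> * (real n + 2) * (real n - 2) + \<gamma> * real n > 0"
proof -
  have "\<tau> * (real n - 2) \<ge> 0" "\<tau> * (real n + 2) * (real n - 2) \<ge> 0" "\<gamma> * real n > 0"
    using assms by simp_all
  then show "\<gamma> + \<tau> * (real n - 2) > 0" "\<tau> * (real n + 2) * (real n - 2) + \<gamma> * real n > 0"
    using assms(3) by linarith+
qed

lemma delta0_nonneg:
  assumes "n \<ge> 2" "\<tau> > 0" "\<gamma> > 0"
  shows "delta0 n \<tau> \<gamma> \<ge> 0"
  using assms cci_denominators_pos[OF assms] unfolding delta0_def by simp

lemma delta0_mult_eq:
  assumes "n \<ge> 2" "\<tau> > 0" "\<gamma> > 0"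
  shows "delta0 n \<tau> \<gamma> * (\<gamma> + \<tau> * (real n - 2)) = 2 * \<tau> * (real n - 2)"
  using cci_denominators_pos[OF assms] unfolding delta0_def by simp

lemma Fcci_delta0_root:
  assumes "n \<ge> 2" "\<tau> > 0" "\<gamma> > 0"
  shows "Fcci n \<tau> \<gamma> (delta0 n \<tau> \<gamma>) 0 = 0"
proof -
  have "Fcci n \<tau> \<gamma> (delta0 n \<tau> \<gamma>) 0 = (real n + delta0 n \<tau> \<gamma>)\<^sup>2
      * (2 * \<tau> * (real n - 2) - delta0 n \<tau> \<gamma> * (\<gamma> + \<tau> * (real n - 2)))"
    unfolding Fcci_def by (simp add: algebra_simps power2_eq_square)
  then show ?thesis using delta0_mult_eq[OF assms] by simp
qed

lemma Fcci_ddiff_delta_diagonal: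
  "Fcci_ddiff_delta n \<tau> \<gamma> y y 0
     = - ((real n + y) * (\<gamma> * (real n + 3 * y) + \<tau> * (real n - 2) * (real n + 3 * y - 4)))"
  unfolding Fcci_ddiff_delta_def by (simp add: algebra_simps power2_eq_square)

lemma slope_denominator_eq:
  assumes "n \<ge> 2" "\<tau> > 0" "\<gamma> > 0"
  defines "d0 \<equiv> delta0 n \<tau> \<gamma>"
  shows "\<gamma> * (real n + 3 * d0) + \<tau> * (real n - 2) * (real n + 3 * d0 - 4)
      = (real n + d0) * (\<gamma> + \<tau> * (real n - 2))"
  using delta0_mult_eq[OF assms(1-3)] unfolding d0_def[symmetric] by (simp add: algebra_simps)

lemma alpha_slope_eq:
  assumes "n \<ge> 2" "\<tau> > 0" "\<gamma> > 0"
  defines "d0 \<equiv> delta0 n \<tau> \<gamma>"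
  shows "4 * \<tau> * (real n - 1) * (real n - 2) / (\<tau> * (real n + 2) * (real n - 2) + \<gamma> * real n)
      = 2 * (real n - 1) * d0 / (real n + d0)"
proof (rule frac_eq_eq[THEN iffD2])
  have "(\<tau> * (real n + 2) * (real n - 2) + \<gamma> * real n) * d0
      = real n * (d0 * (\<gamma> + \<tau> * (real n - 2))) + 2 * \<tau> * (real n - 2) * d0"
    by (simp add: algebra_simps)
  also have "\<dots> = 2 * \<tau> * (real n - 2) * (real n + d0)"
    unfolding d0_def delta0_mult_eq[OF assms(1-3)] by (simp add: algebra_simps)
  finally have "2 * (real n - 1) * ((\<tau> * (real n + 2) * (real n - 2) + \<gamma> * real n) * d0)
      = 2 * (real n - 1) * (2 * \<tau> * (real n - 2) * (real n + d0))" by simp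
  then show "4 * \<tau> * (real n - 1) * (real n - 2) * (real n + d0)
      = 2 * (real n - 1) * d0 * (\<tau> * (real n + 2) * (real n - 2) + \<gamma> * real n)"
    by (simp add: algebra_simps)
  show "\<tau> * (real n + 2) * (real n - 2) + \<gamma> * real n \<noteq> 0" "real n + d0 \<noteq> 0"
    using cci_denominators_pos[OF assms(1-3)] delta0_nonneg[OF assms(1-3)] assms(1) unfolding d0_def by auto
qed

lemma Fcci_smooth_branch:
  assumes "n \<ge> 2" "\<tau> > 0" "\<gamma> > 0"
  defines "d0 \<equiv> delta0 n \<tau> \<gamma>"
  obtains \<epsilon> r \<delta> where "\<epsilon> > 0" "r > 0" "\<delta> 0 = d0"
    "\<And>\<phi>. \<bar>\<phi>\<bar> < \<epsilon> \<Longrightarrow> Fcci n \<tau> \<gamma> (\<delta> \<phi>) \<phi> = 0"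
    "\<And>\<phi> y. \<bar>\<phi>\<bar> < \<epsilon> \<Longrightarrow> \<bar>y - d0\<bar> \<le> r \<Longrightarrow> Fcci n \<tau> \<gamma> y \<phi> = 0 \<Longrightarrow> y = \<delta> \<phi>"
    "smooth_on (ball 0 \<epsilon>) \<delta>"
    "(\<delta> has_real_derivative 2 * \<tau> * (real n - 1) * d0 * (real n - 4 + d0)
        / (\<gamma> * (real n + 3 * d0) + \<tau> * (real n - 2) * (real n + 3 * d0 - 4))) (at 0)"
proof -
  have "real n + d0 > 0" using delta0_nonneg[OF assms(1-3)] assms(1) unfolding d0_def by simp
  then have "Fcci_ddiff_delta n \<tau> \<gamma> d0 d0 0 < 0"
    unfolding Fcci_ddiff_delta_diagonal slope_denominator_eq[OF assms(1-3), folded d0_def]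
    using cci_denominators_pos(1)[OF assms(1-3)] by (simp add: mult_pos_pos)
  then obtain \<epsilon> r \<delta> where "\<epsilon> > 0" "r > 0" "\<delta> 0 = d0"
    and root: "\<And>\<phi>. \<bar>\<phi> - 0\<bar> < \<epsilon> \<Longrightarrow> \<bar>\<delta> \<phi> - d0\<bar> \<le> r \<and> Fcci n \<tau> \<gamma> (\<delta> \<phi>) \<phi> = 0"
    and unique: "\<And>\<phi> y. \<bar>\<phi> - 0\<bar> < \<epsilon> \<Longrightarrow> \<bar>y - d0\<bar> \<le> r \<Longrightarrow> Fcci n \<tau> \<gamma> y \<phi> = 0 \<Longrightarrow> y = \<delta> \<phi>"
    and neg: "\<And>\<phi>. \<bar>\<phi> - 0\<bar> < \<epsilon> \<Longrightarrow> Fcci_ddiff_delta n \<tau> \<gamma> (\<delta> \<phi>) (\<delta> \<phi>) \<phi> < 0"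
    and deriv: "\<And>\<phi>. \<bar>\<phi> - 0\<bar> < \<epsilon> \<Longrightarrow> (\<delta> has_real_derivative
        - Fcci_ddiff_phi n \<tau> \<gamma> (\<delta> \<phi>) \<phi> \<phi> / Fcci_ddiff_delta n \<tau> \<gamma> (\<delta> \<phi>) (\<delta> \<phi>) \<phi>) (at \<phi>)"
    by (rule Fcci.implicit_function[OF Fcci_delta0_root[OF assms(1-3), folded d0_def]]) blast
  have "smooth_on (ball 0 \<epsilon>) \<delta>"
  proof (rule smooth_on_rational_ode)
    show "real_polynomial_function (\<lambda>z. - Fcci_ddiff_phi n \<tau> \<gamma> (snd z) (fst z) (fst z))"
      "real_polynomial_function (\<lambda>z. Fcci_ddiff_delta n \<tau> \<gamma> (snd z) (snd z) (fst z))"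
      unfolding Fcci_ddiff_phi_def Fcci_ddiff_delta_def by (intro real_polynomial_function_intros)+
  next
    fix \<phi> :: real assume "\<phi> \<in> ball 0 \<epsilon>"
    then have "\<bar>\<phi> - 0\<bar> < \<epsilon>" by simp
    then show "(\<delta> has_real_derivative - Fcci_ddiff_phi n \<tau> \<gamma> (\<delta> \<phi>) \<phi> \<phi>
        / Fcci_ddiff_delta n \<tau> \<gamma> (\<delta> \<phi>) (\<delta> \<phi>) \<phi>) (at \<phi>)"
      and "Fcci_ddiff_delta n \<tau> \<gamma> (\<delta> \<phi>) (\<delta> \<phi>) \<phi> \<noteq> 0"
      using deriv neg by (simp_all add: order.strict_implies_not_eq)
  qed
  moreover have "- Fcci_ddiff_phi n \<tau> \<gamma> d0 0 0 / Fcci_ddiff_delta n \<tau> \<gamma> d0 d0 0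
      = 2 * \<tau> * (real n - 1) * d0 * (real n - 4 + d0)
        / (\<gamma> * (real n + 3 * d0) + \<tau> * (real n - 2) * (real n + 3 * d0 - 4))"
    using \<open>real n + d0 > 0\<close> unfolding Fcci_ddiff_delta_diagonal Fcci_ddiff_phi_def by simp
  ultimately show ?thesis
    using \<open>\<epsilon> > 0\<close> \<open>r > 0\<close> \<open>\<delta> 0 = d0\<close> deriv[of 0] root unique
    by (intro that[of \<epsilon> r \<delta>]) auto
qed

lemma alpha_cci_bigo:
  assumes "(\<delta> has_real_derivative c) (at 0)" and pos: "real n + \<delta> 0 > 0"
  shows "(\<lambda>\<phi>. alpha_cci n \<phi> (\<delta> \<phi>) - ((real n - 2) - \<phi> * (2 * (real n - 1) * \<delta> 0 / (real n + \<delta> 0))))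
    \<in> O[nhds 0](\<lambda>\<phi>. \<phi>\<^sup>2)"
proof -
  define q where "q \<phi> = - 2 * (real n - 1) * real n / ((real n + \<delta> 0) * (real n + \<delta> \<phi>))" for \<phi>
  have "isCont q 0"
    using DERIV_isCont[OF assms(1)] pos unfolding q_def by (intro continuous_intros) auto
  then have "q \<in> O[nhds 0](\<lambda>_. 1)"
    unfolding isCont_def tendsto_at_iff_tendsto_nhds by (intro bigoI_tendsto[where c = "q 0"]) auto
  moreover have "(\<lambda>\<phi>. \<delta> \<phi> - \<delta> 0) \<in> O[nhds 0](\<lambda>\<phi>. \<phi>)"
    using DERIV_imp_bigo_diff[OF assms(1)] by simp
  ultimately have "(\<lambda>\<phi>. \<phi> * (\<delta> \<phi> - \<delta> 0) * q \<phi>) \<in> O[nhds 0](\<lambda>\<phi>. \<phi> * \<phi> * 1)"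
    by (intro landau_o.big.mult) auto
  moreover have "\<forall>\<^sub>F \<phi> in nhds 0. real n + \<delta> \<phi> > 0"
    using DERIV_isCont[OF assms(1)] pos unfolding isCont_def tendsto_at_iff_tendsto_nhds
    by (intro order_tendstoD(1)) (auto intro!: tendsto_intros)
  then have "\<forall>\<^sub>F \<phi> in nhds 0. \<phi> * (\<delta> \<phi> - \<delta> 0) * q \<phi>
      = alpha_cci n \<phi> (\<delta> \<phi>) - ((real n - 2) - \<phi> * (2 * (real n - 1) * \<delta> 0 / (real n + \<delta> 0)))"
    by eventually_elim (use pos in \<open>simp add: alpha_cci_def q_def field_simps\<close>)
  ultimately show ?thesis
    by (simp add: landau_o.big.in_cong power2_eq_square)
qed

theorem mainTheorem8:
  fixes n :: nat and \<tau> \<gamma> :: real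
  assumes "n \<ge> 2" and "\<tau> > 0" and "\<gamma> > 0"
  shows "\<exists>\<epsilon>>0. \<exists>\<delta> :: real \<Rightarrow> real.
     smooth_on (ball 0 \<epsilon>) \<delta> \<and>
     \<delta> 0 = delta0 n \<tau> \<gamma> \<and>
     (\<forall>\<phi>\<in>ball 0 \<epsilon>. Fcci n \<tau> \<gamma> (\<delta> \<phi>) \<phi> = 0) \<and>
     (\<forall>\<epsilon>'>0. \<forall>\<delta>' :: real \<Rightarrow> real.
        smooth_on (ball 0 \<epsilon>') \<delta>' \<and> \<delta>' 0 = delta0 n \<tau> \<gamma> \<and>
        (\<forall>\<phi>\<in>ball 0 \<epsilon>'. Fcci n \<tau> \<gamma> (\<delta>' \<phi>) \<phi> = 0)
        \<longrightarrow> (\<forall>\<^sub>F \<phi> in nhds 0. \<delta>' \<phi> = \<delta> \<phi>)) \<and>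
     (let d0 = delta0 n \<tau> \<gamma> in
       (\<lambda>\<phi>. \<delta> \<phi> - (d0 + \<phi> * (2 * \<tau> * (real n - 1) * d0 * (real n - 4 + d0)
              / (\<gamma> * (real n + 3 * d0) + \<tau> * (real n - 2) * (real n + 3 * d0 - 4)))))
         \<in> O[nhds 0](\<lambda>\<phi>. \<phi>^2)) \<and>
     (\<lambda>\<phi>. alpha_cci n \<phi> (\<delta> \<phi>) - ((real n - 2) - \<phi> * (4 * \<tau> * (real n - 1) * (real n - 2)
              / (\<tau> * (real n + 2) * (real n - 2) + \<gamma> * real n))))
         \<in> O[nhds 0](\<lambda>\<phi>. \<phi>^2) \<and>
     (\<lambda>\<phi>. \<tau> * alpha_cci n \<phi> (\<delta> \<phi>) / \<gamma> - ((real n - 2) * \<tau> / \<gamma>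
              - \<phi> * (\<tau> / \<gamma>) * (4 * \<tau> * (real n - 1) * (real n - 2)
              / (\<tau> * (real n + 2) * (real n - 2) + \<gamma> * real n))))
         \<in> O[nhds 0](\<lambda>\<phi>. \<phi>^2)"
proof -
  define d0 where "d0 = delta0 n \<tau> \<gamma>"
  obtain \<epsilon> r \<delta> where "\<epsilon> > 0" "r > 0" "\<delta> 0 = d0"
    and root: "\<And>\<phi>. \<bar>\<phi>\<bar> < \<epsilon> \<Longrightarrow> Fcci n \<tau> \<gamma> (\<delta> \<phi>) \<phi> = 0"
    and unique: "\<And>\<phi> y. \<bar>\<phi>\<bar> < \<epsilon> \<Longrightarrow> \<bar>y - d0\<bar> \<le> r \<Longrightarrow> Fcci n \<tau> \<gamma> y \<phi> = 0 \<Longrightarrow> y = \<delta> \<phi>"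
    and smooth: "smooth_on (ball 0 \<epsilon>) \<delta>"
    and deriv: "(\<delta> has_real_derivative 2 * \<tau> * (real n - 1) * d0 * (real n - 4 + d0)
        / (\<gamma> * (real n + 3 * d0) + \<tau> * (real n - 2) * (real n + 3 * d0 - 4))) (at 0)"
    using Fcci_smooth_branch[OF assms] unfolding d0_def by blast
  have "real n + d0 > 0" using delta0_nonneg[OF assms] assms(1) unfolding d0_def by simp
  then have alpha: "(\<lambda>\<phi>. alpha_cci n \<phi> (\<delta> \<phi>) - ((real n - 2) - \<phi> * (4 * \<tau> * (real n - 1) * (real n - 2)
      / (\<tau> * (real n + 2) * (real n - 2) + \<gamma> * real n)))) \<in> O[nhds 0](\<lambda>\<phi>. \<phi>\<^sup>2)"
    using alpha_cci_bigo[OF deriv] \<open>\<delta> 0 = d0\<close> alpha_slope_eq[OF assms] unfolding d0_def by simp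
  show ?thesis
    using \<open>\<epsilon> > 0\<close> smooth \<open>\<delta> 0 = d0\<close> root smooth_on_taylor_bigo[OF \<open>\<epsilon> > 0\<close> smooth deriv]
      smooth_solution_eventually_eq[OF unique \<open>\<epsilon> > 0\<close> \<open>r > 0\<close>] alpha scaled_expansion_bigo[OF alpha]
    unfolding d0_def Let_def by (intro exI[of _ \<epsilon>] exI[of _ \<delta>] conjI) auto
qed

end
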